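(* Let $r \in \mathbb{Q}_{>0}$ be such that $S_r$ is atomic. Then: (1) $S_r$ is a BF-monoid if and only if $r \ge 1$. (2) If $r \in \mathbb{N}$, then $S_r \cong \mathbb{N}_0$, and $\Delta(x) = \emptyset$ and $\mathsf{c}(x) = 0$ for all $x \in S_r \setminus\{0\}$. (3) If $r \notin \mathbb{N}$, then $\Delta(x) = \{|\mathsf{n}(r) - \mathsf{d}(r)|\}$ for every $x \in S_r$ with $|\mathsf{Z}(x)| > 1$; hence $\Delta(S_r) = \{|\mathsf{n}(r) - \mathsf{d}(r)|\}$. (4) If $r \notin \mathbb{N}$, then $\mathsf{Ca}(S_r) = \{\max\{\mathsf{n}(r), \mathsf{d}(r)\}\}$; hence $\mathsf{c}(S_r) = \max\{\mathsf{n}(r), \mathsf{d}(r)\}$.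
   Context: For $q \in \mathbb{Q}_{>0}$, $\mathsf{n}(q),\mathsf{d}(q)$ are the positive coprime integers with $q = \mathsf{n}(q)/\mathsf{d}(q)$. $S_r$ is the additive submonoid of $(\mathbb{Q}_{\ge 0},+)$ generated by $\{r^n : n \in \mathbb{N}_0\}$; it is atomic exactly when $r=1$ or $\mathsf{n}(r)>1$, and for $r \notin \mathbb{N}$ atomic its atoms are the elements $r^n$, $n \in \mathbb{N}_0$. Factorizations of $x$ are elements of the free commutative monoid $\mathsf{Z}(S_r)$ on the atoms mapping to $x$; $\mathsf{Z}(x)$ is their set, $|z|$ the length (number of atoms with multiplicity), $\mathsf{L}(x)$ the set of lengths. $S_r$ is a BF-monoid if $\mathsf{L}(x)$ is finite for all $x$. For $x \ne 0$, $d \in \mathbb{N}$ is a distance of $x$ if $\mathsf{L}(x) \cap \{\ell, \ell+1, \dots, \ell+d\} = \{\ell, \ell+d\}$ for some $\ell \in \mathsf{L}(x)$; $\Delta(x)$ is the set of such $d$ and $\Delta(S_r) = \bigcup_{x \neq 0} \Delta(x)$. For factorizations $z = \sum_a \mu_a a$, $z' = \sum_a \nu_a a$, $\gcd(z,z') = \sum_a \min\{\mu_a,\nu_a\} a$ and $\mathsf{d}(z,z') = \max\{|z| - |\gcd(z,z')|, |z'| - |\gcd(z,z')|\}$. An $N$-chain from $z$ to $z'$ in $\mathsf{Z}(x)$ is a sequence $z=z_0, \dots, z_k = z'$ in $\mathsf{Z}(x)$ with $\mathsf{d}(z_{i-1}, z_i) \le N$. The catenary degree $\mathsf{c}(x)$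 is the least $N \in \mathbb{N}_0 \cup \{\infty\}$ such that any two factorizations of $x$ are connected by an $N$-chain; $\mathsf{c}(S_r) = \sup_x \mathsf{c}(x)$ and $\mathsf{Ca}(S_r) = \{\mathsf{c}(x) : x \in S_r, \mathsf{c}(x) > 0\}$. *)

theory Defs
  imports Complex_Main "HOL-Library.Multiset" "HOL-Library.Extended_Nat"
begin

definition numr :: "rat \<Rightarrow> int" where "numr q = fst (quotient_of q)"
definition denr :: "rat \<Rightarrow> int" where "denr q = snd (quotient_of q)"

definition Sr :: "rat \<Rightarrow> rat set" where
  "Sr r = {x. \<exists>m :: nat multiset. x = sum_mset (image_mset (\<lambda>k. r ^ k) m)}"

text \<open>Atoms of a submonoid S of (Q_{\<ge>0},+) (the only unit is 0).\<close>
definition atoms :: "rat set \<Rightarrow> rat set" where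
  "atoms S = {a \<in> S. a \<noteq> 0 \<and> (\<forall>b\<in>S. \<forall>c\<in>S. a = b + c \<longrightarrow> b = 0 \<or> c = 0)}"

text \<open>Factorizations: finite multisets of atoms (free commutative monoid on atoms) mapping to x.\<close>
definition Zf :: "rat set \<Rightarrow> rat \<Rightarrow> rat multiset set" where
  "Zf S x = {z. set_mset z \<subseteq> atoms S \<and> sum_mset z = x}"

definition atomic :: "rat set \<Rightarrow> bool" where
  "atomic S \<longleftrightarrow> (\<forall>x\<in>S. x \<noteq> 0 \<longrightarrow> Zf S x \<noteq> {})"

definition Lset :: "rat set \<Rightarrow> rat \<Rightarrow> nat set" where
  "Lset S x = size ` Zf S x"

definition BF_monoid :: "rat set \<Rightarrow> bool" where
  "BF_monoid S \<longleftrightarrow> (\<forall>x\<in>S. finite (Lset S x))"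

definition Delta :: "rat set \<Rightarrow> rat \<Rightarrow> nat set" where
  "Delta S x = {d. d \<ge> 1 \<and> (\<exists>l\<in>Lset S x. Lset S x \<inter> {l..l+d} = {l, l+d})}"

definition Delta_monoid :: "rat set \<Rightarrow> nat set" where
  "Delta_monoid S = (\<Union>x\<in>S - {0}. Delta S x)"

definition fdist :: "rat multiset \<Rightarrow> rat multiset \<Rightarrow> nat" where
  "fdist z z' = (let g = z \<inter># z' in max (size z - size g) (size z' - size g))"

definition is_chain :: "rat set \<Rightarrow> rat \<Rightarrow> enat \<Rightarrow> rat multiset list \<Rightarrow> bool" where
  "is_chain S x N zs \<longleftrightarrow> zs \<noteq> [] \<and> set zs \<subseteq> Zf S x \<and>
     (\<forall>i. Suc i < length zs \<longrightarrow> enat (fdist (zs ! i) (zs ! Suc i)) \<le> N)"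

text \<open>Catenary degree of x: least N in N_0 \<union> {\<infinity>} (Inf of empty set of enat is \<infinity>).\<close>
definition cat :: "rat set \<Rightarrow> rat \<Rightarrow> enat" where
  "cat S x = Inf {N. \<forall>z\<in>Zf S x. \<forall>z'\<in>Zf S x.
       \<exists>zs. is_chain S x N zs \<and> hd zs = z \<and> last zs = z'}"

definition cat_monoid :: "rat set \<Rightarrow> enat" where
  "cat_monoid S = (SUP x\<in>S. cat S x)"

definition Ca :: "rat set \<Rightarrow> enat set" where
  "Ca S = {cat S x | x. x \<in> S \<and> cat S x > 0}"

end

theory Submission
  imports Defs
begin

text \<open>
  Write r = n/d in lowest terms. If r \<ge> 1 every atom is at least 1, so x has factorizations
  of length at most x; if r < 1, the relation d r^(k+1) = n r^k can be applied to n = n r^0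
  again and again, giving factorizations of unbounded length. If r \<in> \<nat> the monoid is
  {0, 1, 2, ...} with the single atom 1.

  Otherwise encode a factorization by the multiset of its exponents. Clearing denominators
  shows that for two disjoint multisets of the same value, the multiplicity of the largest
  exponent is divisible by d and that of the smallest by n; so distinct factorizations of the
  same element are at distance at least max n d. Conversely, the moves d r^(k+1) \<mapsto> n r^k bring
  every factorization to a unique reduced one (fewer than d copies of each positive exponent),
  so any two factorizations are joined by moves, each of which has distance exactly max n d
  and changes the length by |n - d|. Hence the lengths of x form a full arithmetic progression
  with difference |n - d|, and c(x) = max n d as soon as x has two factorizations, as
  n = n r^0 = d r^1 does.
\<close>

lemma fdist_eq_max_size_diff: "fdist z z' = max (size (z - z')) (size (z' - z))"
  by (simp add: fdist_def Let_def size_Diff_subset_Int multiset_inter_commute)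

lemma Delta_eq_empty_if_unique_factorization:
  assumes "\<And>z z'. z \<in> Zf S x \<Longrightarrow> z' \<in> Zf S x \<Longrightarrow> z = z'"
  shows "Delta S x = {}"
proof -
  have "l' = l" if "l \<in> Lset S x" "l' \<in> Lset S x" for l l'
    using that assms unfolding Lset_def by auto
  moreover have "l + k \<in> Lset S x" if "Lset S x \<inter> {l..l+k} = {l, l+k}" for l k
    using that by blast
  ultimately have "\<not> (1 \<le> k \<and> (\<exists>l\<in>Lset S x. Lset S x \<inter> {l..l+k} = {l, l+k}))" for k
    by (metis add_cancel_left_right not_one_le_zero)
  then show ?thesis unfolding Delta_def by blast
qed

lemma cat_eq_0_if_unique_factorization:
  assumes "\<And>z z'. z \<in> Zf S x \<Longrightarrow> z' \<in> Zf S x \<Longrightarrow> z = z'"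
  shows "cat S x = 0"
proof -
  have "is_chain S x 0 [z] \<and> hd [z] = z \<and> last [z] = z'" if "z \<in> Zf S x" "z' \<in> Zf S x" for z z'
    using that assms by (auto simp: is_chain_def)
  then have "cat S x \<le> 0" unfolding cat_def by (intro Inf_lower) blast
  then show ?thesis by simp
qed

lemma eq_or_eq_add_if_mod_eq:
  fixes a c g :: nat
  assumes "c mod g = a mod g" "a \<le> c" "c \<le> a + g"
  shows "c = a \<or> c = a + g"
proof -
  obtain t where t: "c - a = g * t" using assms(1,2) mod_eq_dvd_iff_nat by blast
  show ?thesis
  proof (cases "t = 0")
    case False
    then have "g \<le> c - a" using t by simp
    then show ?thesis using assms(2,3) by linarith
  qed (use t assms(2) in auto)
qed

lemma successive_distances_eq:
  fixes A :: "nat set"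
  assumes "0 < g"
    and cong: "\<And>a b. a \<in> A \<Longrightarrow> b \<in> A \<Longrightarrow> a mod g = b mod g"
    and interval: "\<And>a b l. a \<in> A \<Longrightarrow> b \<in> A \<Longrightarrow> a \<le> l \<Longrightarrow> l \<le> b \<Longrightarrow> l mod g = a mod g \<Longrightarrow> l \<in> A"
    and a: "a \<in> A" "a + g \<in> A"
  shows "{k. 1 \<le> k \<and> (\<exists>l\<in>A. A \<inter> {l..l+k} = {l, l+k})} = {g}"
proof (intro equalityI subsetI)
  fix k assume "k \<in> {k. 1 \<le> k \<and> (\<exists>l\<in>A. A \<inter> {l..l+k} = {l, l+k})}"
  then obtain l where k: "1 \<le> k" "l \<in> A" "A \<inter> {l..l+k} = {l, l+k}" by auto
  then have lk: "l + k \<in> A" by auto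
  then have "g dvd k" using cong[OF lk k(2)] mod_eq_dvd_iff_nat[of l "l + k" g] by simp
  then have "g \<le> k" using k(1) by (simp add: dvd_imp_le)
  then have "l + g \<in> A \<inter> {l..l+k}" using interval[OF k(2) lk, of "l + g"] by simp
  then show "k \<in> {g}" using k(3) \<open>0 < g\<close> by auto
next
  fix k assume "k \<in> {g}"
  have "A \<inter> {a..a+g} = {a, a+g}"
    using a cong[OF _ a(1)] eq_or_eq_add_if_mod_eq by fastforce
  then show "k \<in> {k. 1 \<le> k \<and> (\<exists>l\<in>A. A \<inter> {l..l+k} = {l, l+k})}"
    using \<open>k \<in> {g}\<close> \<open>0 < g\<close> a(1) by auto
qed

lemma set_mset_subset_range: "set_mset z \<subseteq> range f \<Longrightarrow> \<exists>u. z = image_mset f u"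
proof (induction z)
  case (add a z)
  then obtain u k where "z = image_mset f u" "a = f k" by auto
  then show ?case by (intro exI[of _ "add_mset k u"]) simp
qed simp

lemma rtranclp_imp_chain:
  assumes "R\<^sup>*\<^sup>* a b"
  shows "\<exists>zs. zs \<noteq> [] \<and> hd zs = a \<and> last zs = b \<and> set zs \<subseteq> {y. R\<^sup>*\<^sup>* a y} \<and>
           (\<forall>i. Suc i < length zs \<longrightarrow> R (zs ! i) (zs ! Suc i))"
  using assms
proof (induction rule: converse_rtranclp_induct)
  case base
  then show ?case by (intro exI[of _ "[b]"]) auto
next
  case (step a c)
  then obtain zs where zs: "zs \<noteq> []" "hd zs = c" "last zs = b" "set zs \<subseteq> {y. R\<^sup>*\<^sup>* c y}"
     "\<forall>i. Suc i < length zs \<longrightarrow> R (zs ! i) (zs ! Suc i)" by blast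
  have "\<forall>i. Suc i < length (a # zs) \<longrightarrow> R ((a # zs) ! i) ((a # zs) ! Suc i)"
  proof (intro allI impI)
    fix i assume i: "Suc i < length (a # zs)"
    show "R ((a # zs) ! i) ((a # zs) ! Suc i)"
    proof (cases i)
      case 0 then show ?thesis using zs step(1) by (simp add: hd_conv_nth)
    next
      case (Suc j) then show ?thesis using zs i by simp
    qed
  qed
  moreover have "set (a # zs) \<subseteq> {y. R\<^sup>*\<^sup>* a y}"
    using zs(4) step(1) by (auto intro: converse_rtranclp_into_rtranclp)
  ultimately show ?case using zs by (intro exI[of _ "a # zs"]) auto
qed

lemma hd_eq_last_if_adjacent_eq:
  assumes "zs \<noteq> []" "\<And>i. Suc i < length zs \<Longrightarrow> zs ! i = zs ! Suc i"
  shows "hd zs = last zs"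
proof -
  have "zs ! j = hd zs" if "j < length zs" for j
    using that
  proof (induction j)
    case (Suc j)
    then show ?case using assms(2)[of j] by simp
  qed (simp add: assms(1) hd_conv_nth)
  then show ?thesis using assms(1) by (simp add: last_conv_nth)
qed

lemma sum_mset_mod_eq_count:
  fixes f :: "'a \<Rightarrow> nat"
  assumes "\<And>j. j \<in># w \<Longrightarrow> j \<noteq> K \<Longrightarrow> p dvd f j"
  shows "sum_mset (image_mset f w) mod p = count w K * f K mod p"
  using assms
proof (induction w)
  case (add j w)
  then have IH: "sum_mset (image_mset f w) mod p = count w K * f K mod p" by simp
  show ?case
  proof (cases "j = K")
    case True
    have "(f K + sum_mset (image_mset f w)) mod p = (f K + count w K * f K) mod p"
      using IH by (metis mod_add_right_eq)
    then show ?thesis using True by simp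
  next
    case False
    then have "p dvd f j" using add.prems by simp
    then have "(f j + sum_mset (image_mset f w)) mod p = sum_mset (image_mset f w) mod p"
      by (metis add_0 dvd_eq_mod_eq_0 mod_add_left_eq)
    then show ?thesis using IH False by simp
  qed
qed simp

lemma dvd_count_if_sum_mset_eq:
  fixes f :: "'a \<Rightarrow> nat"
  assumes "\<And>j. j \<in># u + v \<Longrightarrow> j \<noteq> K \<Longrightarrow> p dvd f j" "K \<notin># v" "coprime p (f K)"
    and "sum_mset (image_mset f u) = sum_mset (image_mset f v)"
  shows "p dvd count u K"
proof -
  have "count u K * f K mod p = sum_mset (image_mset f u) mod p"
    by (rule sum_mset_mod_eq_count[symmetric]) (use assms(1) in auto)
  also have "\<dots> = count v K * f K mod p"
    unfolding assms(4) by (rule sum_mset_mod_eq_count) (use assms(1) in auto)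
  also have "\<dots> = 0" using assms(2) by (simp add: not_in_iff)
  finally have "p dvd count u K * f K" by (rule mod_0_imp_dvd)
  then show ?thesis using assms(3) by (simp add: coprime_commute coprime_dvd_mult_left_iff)
qed

lemma le_size_if_dvd_count:
  assumes "p dvd count u k" "k \<in># u"
  shows "p \<le> size u"
proof -
  have "p \<le> count u k" using assms(1) by (rule dvd_imp_le) (use assms(2) in simp)
  then show ?thesis using count_le_size[of u k] by linarith
qed

subsection \<open>Bounded factorization for r \<ge> 1\<close>

lemma Sr_ge_1:
  assumes "1 \<le> r" "y \<in> Sr r" "y \<noteq> 0"
  shows "1 \<le> y"
proof -
  obtain m where m: "y = sum_mset (image_mset (\<lambda>k. r ^ k) m)" using assms(2) unfolding Sr_def by auto
  then obtain k m' where "m = add_mset k m'" using assms(3) by (cases m) auto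
  then have "y = r ^ k + sum_mset (image_mset (\<lambda>k. r ^ k) m')" using m by simp
  moreover have "1 \<le> r ^ k" using assms(1) by (rule one_le_power)
  moreover have "0 \<le> sum_mset (image_mset (\<lambda>k. r ^ k) m')"
    using assms(1) by (induction m') simp_all
  ultimately show ?thesis by linarith
qed

lemma of_nat_size_le_sum_mset:
  fixes z :: "'a :: linordered_semidom multiset"
  shows "(\<And>a. a \<in># z \<Longrightarrow> 1 \<le> a) \<Longrightarrow> of_nat (size z) \<le> sum_mset z"
  by (induction z) (auto intro: add_mono)

lemma BF_monoid_Sr_if_ge_1:
  assumes "1 \<le> r"
  shows "BF_monoid (Sr r)"
  unfolding BF_monoid_def
proof
  fix x assume "x \<in> Sr r"
  have "Lset (Sr r) x \<subseteq> {..nat \<lceil>x\<rceil>}"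
  proof
    fix l assume "l \<in> Lset (Sr r) x"
    then obtain z where z: "z \<in> Zf (Sr r) x" "l = size z" unfolding Lset_def by auto
    have "a \<in># z \<Longrightarrow> 1 \<le> a" for a using z(1) Sr_ge_1[OF assms] unfolding Zf_def atoms_def by auto
    then have "of_nat l \<le> x" using of_nat_size_le_sum_mset z unfolding Zf_def by auto
    then have "of_nat l \<le> (of_int \<lceil>x\<rceil> :: rat)" using le_of_int_ceiling order_trans by blast
    then show "l \<in> {..nat \<lceil>x\<rceil>}" by (simp add: le_nat_iff)
  qed
  then show "finite (Lset (Sr r) x)" by (rule finite_subset) simp
qed

subsection \<open>Integer base\<close>

lemma Sr_of_nat: "Sr (of_nat m) = range of_nat"
proof (intro equalityI subsetI)
  fix x assume "x \<in> Sr (of_nat m)"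
  then obtain u where "x = sum_mset (image_mset (\<lambda>k. of_nat m ^ k) u)" unfolding Sr_def by auto
  also have "\<dots> = of_nat (sum_mset (image_mset (\<lambda>k. m ^ k) u))" by (induction u) auto
  finally show "x \<in> range of_nat" by (metis rangeI)
next
  fix x :: rat assume "x \<in> range of_nat"
  then obtain j where "x = sum_mset (image_mset (\<lambda>k. of_nat m ^ k) (replicate_mset j 0))" by auto
  then show "x \<in> Sr (of_nat m)" unfolding Sr_def by blast
qed

lemma atoms_Sr_of_nat: "atoms (Sr (of_nat m)) \<subseteq> {1}"
proof
  fix a assume a: "a \<in> atoms (Sr (of_nat m))"
  then obtain j where j: "a = of_nat j" "j \<noteq> 0" unfolding atoms_def Sr_of_nat by auto
  show "a \<in> {1}"
  proof (rule ccontr)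
    assume "a \<notin> {1}"
    then have j2: "2 \<le> j" using j by auto
    then have a_eq: "a = 1 + of_nat (j - 1)" using j by (simp add: of_nat_diff)
    have "(1 :: rat) \<in> Sr (of_nat m)" "(of_nat (j - 1) :: rat) \<in> Sr (of_nat m)"
      unfolding Sr_of_nat by (metis of_nat_1 rangeI) simp
    then have "(1 :: rat) = 0 \<or> (of_nat (j - 1) :: rat) = 0"
      using a a_eq unfolding atoms_def by blast
    then show False using j2 by simp
  qed
qed

lemma Zf_Sr_Nats_unique:
  assumes "r \<in> \<nat>" "z \<in> Zf (Sr r) x" "z' \<in> Zf (Sr r) x"
  shows "z = z'"
proof -
  obtain m where r: "r = of_nat m" using assms(1) by (auto elim: Nats_cases)
  have "set_mset z \<subseteq> {1}" "set_mset z' \<subseteq> {1}"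
    using assms(2,3) atoms_Sr_of_nat unfolding r Zf_def by blast+
  then have z: "z = replicate_mset (size z) 1" and z': "z' = replicate_mset (size z') 1"
    by (simp_all only: set_mset_subset_singletonD)
  have "of_nat (size z) = sum_mset z" by (subst z) simp
  also have "\<dots> = sum_mset z'" using assms(2,3) unfolding Zf_def by simp
  also have "\<dots> = of_nat (size z')" by (subst z') simp
  finally have "size z = size z'" by simp
  then show ?thesis using z z' by metis
qed

lemma Sr_Nats_iso:
  assumes "r \<in> \<nat>"
  shows "\<exists>f :: rat \<Rightarrow> nat. bij_betw f (Sr r) UNIV \<and> f 0 = 0 \<and>
           (\<forall>x\<in>Sr r. \<forall>y\<in>Sr r. f (x + y) = f x + f y)"
proof -
  obtain m where r: "r = of_nat m" using assms by (auto elim: Nats_cases)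
  have "bij_betw (\<lambda>x. nat \<lfloor>x\<rfloor>) (range (of_nat :: nat \<Rightarrow> rat)) UNIV"
    by (rule bij_betw_byWitness[where f' = of_nat]) auto
  then show ?thesis unfolding r Sr_of_nat by (intro exI[of _ "\<lambda>x. nat \<lfloor>x\<rfloor>"]) (auto simp flip: of_nat_add)
qed

subsection \<open>Non-integer base\<close>

locale power_monoid =
  fixes r :: rat and n d :: nat
  assumes r_eq: "r = of_nat n / of_nat d" and n_pos: "0 < n" and two_le_d: "2 \<le> d"
    and coprime_n_d: "coprime n d"
begin

definition val :: "nat multiset \<Rightarrow> rat" where
  "val u = sum_mset (image_mset (\<lambda>k. r ^ k) u)"

definition gap :: nat where
  "gap = nat \<bar>int n - int d\<bar>"

lemma r_pos: "0 < r"
  using n_pos two_le_d r_eq by simp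

lemma n_neq_d: "n \<noteq> d"
  using coprime_n_d two_le_d by auto

lemma r_neq_1: "r \<noteq> 1"
  using n_neq_d two_le_d r_eq by (auto simp: field_simps)

lemma gap_pos: "0 < gap"
  using n_neq_d by (simp add: gap_def)

lemma d_mult_power_Suc: "of_nat d * r ^ Suc k = of_nat n * r ^ k"
  using two_le_d r_eq by (simp add: field_simps)

lemma inj_power: "inj (\<lambda>k::nat. r ^ k)"
  using power_inject_exp'[OF r_neq_1 r_pos] by (auto simp: inj_def)

lemma val_empty [simp]: "val {#} = 0"
  and val_union [simp]: "val (u + v) = val u + val v"
  and val_add_mset [simp]: "val (add_mset k u) = r ^ k + val u"
  and val_replicate_mset [simp]: "val (replicate_mset c k) = of_nat c * r ^ k"
  by (simp_all add: val_def)

lemma val_pos: "u \<noteq> {#} \<Longrightarrow> 0 < val u"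
proof (induction u)
  case (add k u)
  then have "0 \<le> val u" by (cases "u = {#}") auto
  then show ?case using r_pos by (simp add: add_pos_nonneg)
qed simp

lemma val_eq_0_iff: "val u = 0 \<longleftrightarrow> u = {#}"
  using val_pos by fastforce

text \<open>Clearing denominators: with all exponents in [m, M], the value scaled by d^M is n^m
  times a natural number in which r^j contributes n^(j-m) d^(M-j).\<close>

lemma val_mult_d_power:
  assumes "\<And>j. j \<in># u \<Longrightarrow> m \<le> j \<and> j \<le> M"
  shows "val u * of_nat d ^ M = of_nat n ^ m * of_nat (sum_mset (image_mset (\<lambda>j. n ^ (j - m) * d ^ (M - j)) u))"
  using assms
proof (induction u)
  case (add j u)
  then have jm: "m \<le> j" "j \<le> M" by auto
  have "(of_nat d :: rat) ^ M = of_nat d ^ j * of_nat d ^ (M - j)"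
       "(of_nat n :: rat) ^ j = of_nat n ^ m * of_nat n ^ (j - m)"
    using jm by (simp_all flip: power_add)
  then have "r ^ j * of_nat d ^ M = of_nat n ^ m * (of_nat n ^ (j - m) * of_nat d ^ (M - j))"
    using two_le_d unfolding r_eq power_divide by (simp add: field_simps)
  then show ?case using add by (simp add: algebra_simps)
qed simp

lemma d_dvd_count_max:
  assumes "u \<inter># v = {#}" "val u = val v" "\<And>j. j \<in># u + v \<Longrightarrow> j \<le> M"
  shows "d dvd count u M"
proof (cases "M \<in># u")
  case True
  let ?f = "\<lambda>j. n ^ (j - 0) * d ^ (M - j)"
  have "val u * of_nat d ^ M = of_nat n ^ 0 * of_nat (sum_mset (image_mset ?f u))"
    by (rule val_mult_d_power) (use assms(3) in auto)
  moreover have "val v * of_nat d ^ M = of_nat n ^ 0 * of_nat (sum_mset (image_mset ?f v))"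
    by (rule val_mult_d_power) (use assms(3) in auto)
  ultimately have "sum_mset (image_mset ?f u) = sum_mset (image_mset ?f v)"
    using assms(2) by (simp del: of_nat_sum_mset)
  moreover have "d dvd ?f j" if "j \<in># u + v" "j \<noteq> M" for j
  proof -
    have "M - j = Suc (M - j - 1)" using assms(3)[OF that(1)] that(2) by simp
    then show ?thesis by (metis dvd_mult dvd_triv_left power_Suc)
  qed
  moreover have "M \<notin># v" using True assms(1) by (auto simp: disjunct_not_in)
  moreover have "coprime d (?f M)" using coprime_n_d by (simp add: coprime_commute)
  ultimately show ?thesis by (intro dvd_count_if_sum_mset_eq[of u v M d ?f])
qed (simp add: not_in_iff)

lemma n_dvd_count_min:
  assumes "u \<inter># v = {#}" "val u = val v" "\<And>j. j \<in># u + v \<Longrightarrow> m \<le> j"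
  shows "n dvd count u m"
proof (cases "m \<in># u")
  case True
  define M where "M = Max (set_mset (u + v))"
  have M: "j \<le> M" if "j \<in># u + v" for j unfolding M_def using that by simp
  let ?f = "\<lambda>j. n ^ (j - m) * d ^ (M - j)"
  have "val u * of_nat d ^ M = of_nat n ^ m * of_nat (sum_mset (image_mset ?f u))"
    by (rule val_mult_d_power) (use assms(3) M in auto)
  moreover have "val v * of_nat d ^ M = of_nat n ^ m * of_nat (sum_mset (image_mset ?f v))"
    by (rule val_mult_d_power) (use assms(3) M in auto)
  ultimately have "sum_mset (image_mset ?f u) = sum_mset (image_mset ?f v)"
    using assms(2) n_pos by (simp del: of_nat_sum_mset)
  moreover have "n dvd ?f j" if "j \<in># u + v" "j \<noteq> m" for j
  proof -
    have "j - m = Suc (j - m - 1)" using assms(3)[OF that(1)] that(2) by simp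
    then show ?thesis by (metis dvd_mult2 dvd_triv_left power_Suc)
  qed
  moreover have "m \<notin># v" using True assms(1) by (auto simp: disjunct_not_in)
  moreover have "coprime n (?f m)" using coprime_n_d by simp
  ultimately show ?thesis by (intro dvd_count_if_sum_mset_eq[of u v m n ?f])
qed (simp add: not_in_iff)

lemma val_diff_eq:
  assumes "u \<noteq> v" "val u = val v"
  shows "(u - v) \<inter># (v - u) = {#}" "val (u - v) = val (v - u)" "u - v \<noteq> {#}" "v - u \<noteq> {#}"
proof -
  show "(u - v) \<inter># (v - u) = {#}" by (rule multiset_eqI) simp
  have u: "u = (u - v) + (u \<inter># v)" and v: "v = (v - u) + (u \<inter># v)"
    by (simp_all add: multiset_eq_iff min_def)
  then show eq: "val (u - v) = val (v - u)" using assms(2) by (metis add_right_cancel val_union)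
  have "u - v \<noteq> {#} \<or> v - u \<noteq> {#}" using u v assms(1) by auto
  then show "u - v \<noteq> {#}" "v - u \<noteq> {#}" using eq val_eq_0_iff by metis+
qed

lemma max_le_size_diff:
  assumes "u \<noteq> v" "val u = val v"
  shows "max n d \<le> max (size (u - v)) (size (v - u))"
proof -
  define a b where "a = u - v" and "b = v - u"
  have ab: "a \<inter># b = {#}" "val a = val b" "a + b \<noteq> {#}"
    using val_diff_eq[OF assms] unfolding a_def b_def by auto
  have ba: "b \<inter># a = {#}" "val b = val a" using ab by (simp_all add: multiset_inter_commute)
  define M where "M = Max (set_mset (a + b))"
  define m where "m = Min (set_mset (a + b))"
  have M: "M \<in># a + b" "\<And>j. j \<in># a + b \<Longrightarrow> j \<le> M"
    and m: "m \<in># a + b" "\<And>j. j \<in># a + b \<Longrightarrow> m \<le> j"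
    using ab(3) unfolding M_def m_def by (auto simp del: set_mset_union)
  have "d \<le> size a \<or> d \<le> size b"
    using M le_size_if_dvd_count d_dvd_count_max[OF ab(1,2)] d_dvd_count_max[OF ba]
    by (metis add.commute union_iff)
  moreover have "n \<le> size a \<or> n \<le> size b"
    using m le_size_if_dvd_count n_dvd_count_min[OF ab(1,2)] n_dvd_count_min[OF ba]
    by (metis add.commute union_iff)
  ultimately show ?thesis unfolding a_def b_def by auto
qed

definition move :: "nat multiset \<Rightarrow> nat multiset \<Rightarrow> bool" where
  "move u v \<longleftrightarrow> (\<exists>w k. u = w + replicate_mset d (Suc k) \<and> v = w + replicate_mset n k)"

definition adjacent :: "nat multiset \<Rightarrow> nat multiset \<Rightarrow> bool" where
  "adjacent u v \<longleftrightarrow> move u v \<or> move v u"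

definition reduced :: "nat multiset \<Rightarrow> bool" where
  "reduced u \<longleftrightarrow> (\<forall>k. count u (Suc k) < d)"

lemma move_val: "move u v \<Longrightarrow> val u = val v"
  unfolding move_def using d_mult_power_Suc by auto

lemma move_size_diff:
  assumes "move u v"
  shows "size (u - v) = d" "size (v - u) = n"
proof -
  obtain w k where u: "u = w + replicate_mset d (Suc k)" and v: "v = w + replicate_mset n k"
    using assms unfolding move_def by auto
  have "u - v = replicate_mset d (Suc k)" "v - u = replicate_mset n k"
    unfolding u v by (auto simp: multiset_eq_iff)
  then show "size (u - v) = d" "size (v - u) = n" by simp_all
qed

lemma adjacent_val: "adjacent u v \<Longrightarrow> val u = val v"
  unfolding adjacent_def using move_val by metis

lemma adjacent_size: "adjacent u v \<Longrightarrow> size v = size u + gap \<or> size u = size v + gap"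
  unfolding adjacent_def move_def gap_def by auto

lemma fdist_image_powers:
  "fdist (image_mset (\<lambda>k. r ^ k) u) (image_mset (\<lambda>k. r ^ k) v) = max (size (u - v)) (size (v - u))"
  by (simp add: fdist_eq_max_size_diff image_mset_diff_if_inj[OF inj_power, symmetric])

lemma inj_image_powers: "inj (image_mset (\<lambda>k. r ^ k))"
  by (rule multiset.inj_map[OF inj_power])

lemma fdist_adjacent:
  "adjacent u v \<Longrightarrow> fdist (image_mset (\<lambda>k. r ^ k) u) (image_mset (\<lambda>k. r ^ k) v) = max n d"
  unfolding adjacent_def fdist_image_powers by (auto simp: move_size_diff max.commute)

lemma adjacents_val: "adjacent\<^sup>*\<^sup>* u v \<Longrightarrow> val u = val v"
  by (induction rule: rtranclp_induct) (auto dest: adjacent_val)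

lemma adjacents_size_mod: "adjacent\<^sup>*\<^sup>* u v \<Longrightarrow> size u mod gap = size v mod gap"
  by (induction rule: rtranclp_induct) (auto dest: adjacent_size)

lemma moves_imp_adjacents:
  assumes "move\<^sup>*\<^sup>* u v"
  shows "adjacent\<^sup>*\<^sup>* u v" "adjacent\<^sup>*\<^sup>* v u"
  using assms
  by (induction rule: rtranclp_induct)
     (auto simp: adjacent_def intro: rtranclp.rtrancl_into_rtrancl converse_rtranclp_into_rtranclp)

lemma moves_to_reduced: "\<exists>v. move\<^sup>*\<^sup>* u v \<and> reduced v"
proof (induction u rule: wf_induct[OF wf_mult[OF wf_less_than]])
  case (1 u)
  show ?case
  proof (cases "reduced u")
    case False
    then obtain k where "d \<le> count u (Suc k)" unfolding reduced_def by (auto simp: not_less)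
    then obtain w where u: "u = w + replicate_mset d (Suc k)"
      by (metis count_le_replicate_mset_subset_eq subset_mset.add_diff_inverse add.commute)
    define v where "v = w + replicate_mset n k"
    have "move u v" unfolding move_def v_def using u by blast
    moreover have "(v, u) \<in> mult less_than"
      unfolding v_def u using two_le_d by (intro one_step_implies_mult) auto
    ultimately show ?thesis using 1 by (meson converse_rtranclp_into_rtranclp)
  qed blast
qed

lemma reduced_unique:
  assumes "reduced a" "reduced b" "val a = val b"
  shows "a = b"
proof (rule ccontr)
  assume "a \<noteq> b"
  define u v where "u = a - b" and "v = b - a"
  have uv: "u \<inter># v = {#}" "val u = val v" "u \<noteq> {#}" "v \<noteq> {#}"
    using val_diff_eq[OF \<open>a \<noteq> b\<close> assms(3)] unfolding u_def v_def by auto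
  define M where "M = Max (set_mset (u + v))"
  have M: "M \<in># u + v" "\<And>j. j \<in># u + v \<Longrightarrow> j \<le> M"
    using uv(3) unfolding M_def by (auto simp del: set_mset_union)
  show False
  proof (cases M)
    case 0
    obtain x y where "x \<in># u" "y \<in># v" using uv(3,4) by (meson multiset_nonemptyE)
    then have "0 \<in># u" "0 \<in># v" using M(2)[of x] M(2)[of y] 0 by auto
    then show False using uv(1) by (auto simp: disjunct_not_in)
  next
    case (Suc k)
    have "count u M \<le> count a M" "count v M \<le> count b M" unfolding u_def v_def by simp_all
    then have "count u M < d" "count v M < d"
      using assms(1,2) Suc unfolding reduced_def by (metis le_less_trans)+
    moreover have "d dvd count u M" using uv(1,2) M(2) by (rule d_dvd_count_max)
    moreover have "v \<inter># u = {#}" "val v = val u" using uv(1,2) by (simp_all add: multiset_inter_commute)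
    then have "d dvd count v M" by (rule d_dvd_count_max) (use M(2) in auto)
    ultimately have "count u M = 0" "count v M = 0" by (auto dest: dvd_imp_le)
    then show False using M(1) by (auto simp: count_eq_zero_iff)
  qed
qed

lemma adjacents_if_val_eq:
  assumes "val u = val v"
  shows "adjacent\<^sup>*\<^sup>* u v"
proof -
  obtain a b where a: "move\<^sup>*\<^sup>* u a" "reduced a" and b: "move\<^sup>*\<^sup>* v b" "reduced b"
    using moves_to_reduced by meson
  have "val a = val b"
    using a(1) b(1) assms by (metis adjacents_val moves_imp_adjacents(1))
  then have "a = b" using reduced_unique a(2) b(2) by blast
  then show ?thesis using moves_imp_adjacents a(1) b(1) by (meson rtranclp_trans)
qed

lemma adjacents_size_between:
  assumes "adjacent\<^sup>*\<^sup>* u v" "min (size u) (size v) \<le> l" "l \<le> max (size u) (size v)"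
    and "l mod gap = size u mod gap"
  shows "\<exists>w. adjacent\<^sup>*\<^sup>* u w \<and> size w = l"
  using assms
proof (induction rule: rtranclp_induct)
  case (step v v')
  show ?case
  proof (cases "min (size u) (size v) \<le> l \<and> l \<le> max (size u) (size v)")
    case True
    then show ?thesis using step.IH step.prems(3) by blast
  next
    case False
    have l_mod: "l mod gap = size v mod gap"
      using step.prems(3) adjacents_size_mod[OF step.hyps(1)] by simp
    have "l = size v'"
      using adjacent_size[OF step.hyps(2)]
    proof
      assume v': "size v' = size v + gap"
      then show ?thesis
        using eq_or_eq_add_if_mod_eq[OF l_mod] False step.prems(1,2) by (auto simp: min_def max_def split: if_splits)
    next
      assume v: "size v = size v' + gap"
      have "l mod gap = size v' mod gap" using l_mod v by simp
      then show ?thesis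
        using eq_or_eq_add_if_mod_eq[of l gap "size v'"] v False step.prems(1,2) by (auto simp: min_def max_def split: if_splits)
    qed
    moreover have "adjacent\<^sup>*\<^sup>* u v'" using step.hyps by (rule rtranclp.rtrancl_into_rtrancl)
    ultimately show ?thesis by blast
  qed
qed auto

lemma Sr_eq_range_val: "Sr r = range val"
  unfolding Sr_def val_def by auto

lemma power_in_Sr: "r ^ k \<in> Sr r"
  unfolding Sr_eq_range_val by (rule range_eqI[of _ _ "{#k#}"]) simp

lemma atoms_subset_powers: "atoms (Sr r) \<subseteq> range (\<lambda>k. r ^ k)"
proof
  fix a assume a: "a \<in> atoms (Sr r)"
  then obtain u where u: "a = val u" unfolding atoms_def Sr_eq_range_val by auto
  with a have "u \<noteq> {#}" unfolding atoms_def by auto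
  then obtain k u' where "u = add_mset k u'" by (cases u) auto
  then have "a = r ^ k + val u'" using u by simp
  moreover have "val u' \<in> Sr r" unfolding Sr_eq_range_val by simp
  ultimately have "val u' = 0" using a power_in_Sr r_pos unfolding atoms_def by force
  then show "a \<in> range (\<lambda>k. r ^ k)" using \<open>a = r ^ k + val u'\<close> by simp
qed

text \<open>For n = 1 there are no atoms at all, since r^k = r^(k+1) + (d - 1) r^(k+1).\<close>

lemma two_le_n_if_atomic:
  assumes "atomic (Sr r)"
  shows "2 \<le> n"
proof (rule ccontr)
  assume "\<not> 2 \<le> n"
  then have n: "n = 1" using n_pos by simp
  have "r ^ k \<notin> atoms (Sr r)" for k
  proof
    assume k: "r ^ k \<in> atoms (Sr r)"
    define c where "c = val (replicate_mset (d - 1) (Suc k))"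
    have "r ^ k = of_nat d * r ^ Suc k" using d_mult_power_Suc[of k] n by simp
    also have "\<dots> = (1 + of_nat (d - 1)) * r ^ Suc k" using two_le_d by (simp add: of_nat_diff)
    also have "\<dots> = r ^ Suc k + c" unfolding c_def by (simp add: distrib_right)
    finally have "r ^ k = r ^ Suc k + c" .
    moreover have "r ^ Suc k \<in> Sr r" by (rule power_in_Sr)
    moreover have "c \<in> Sr r" unfolding c_def Sr_eq_range_val by (rule rangeI)
    moreover have "r ^ Suc k \<noteq> 0" "c \<noteq> 0"
      using r_pos two_le_d unfolding c_def by simp_all
    ultimately show False using k unfolding atoms_def by blast
  qed
  then have "atoms (Sr r) = {}" using atoms_subset_powers by blast
  moreover have "(1::rat) \<in> Sr r" using power_in_Sr[of 0] by simp
  ultimately obtain z :: "rat multiset" where "set_mset z \<subseteq> {}" "sum_mset z = 1"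
    using assms unfolding atomic_def Zf_def by fastforce
  then show False by simp
qed

end

locale atomic_power_monoid = power_monoid + assumes two_le_n: "2 \<le> n"
begin

text \<open>A sum of at least two powers is never a power r^k: r^k would be the largest (if r > 1)
  or smallest (if r < 1) exponent, occurring once, which is not divisible by d (resp. n).\<close>

lemma val_neq_power:
  assumes "2 \<le> size w"
  shows "val w \<noteq> r ^ k"
proof
  assume "val w = r ^ k"
  have lt: "r ^ j < r ^ k" if j: "j \<in># w" for j
  proof -
    obtain w' where w: "w = add_mset j w'" by (rule mset_add[OF j])
    then have "w' \<noteq> {#}" using assms by auto
    then have "0 < val w'" by (rule val_pos)
    then show ?thesis using \<open>val w = r ^ k\<close> w by simp
  qed
  then have "k \<notin># w" by (meson less_irrefl)
  then have disj: "{#k#} \<inter># w = {#}" by simp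
  have eq: "val {#k#} = val w" using \<open>val w = r ^ k\<close> by simp
  show False
  proof (cases "1 < r")
    case True
    then have "j \<le> k" if "j \<in># {#k#} + w" for j
      using that lt[of j] power_strict_increasing_iff[OF True, of j k] by auto
    then have "d dvd count {#k#} k" by (rule d_dvd_count_max[OF disj eq])
    then show False using two_le_d by simp
  next
    case False
    then have r: "r < 1" using r_neq_1 by simp
    have "k \<le> j" if "j \<in># {#k#} + w" for j
      using that lt[of j] power_strict_decreasing_iff[OF r_pos r, of j k] by auto
    then have "n dvd count {#k#} k" by (rule n_dvd_count_min[OF disj eq])
    then show False using two_le_n by simp
  qed
qed

lemma atoms_eq: "atoms (Sr r) = range (\<lambda>k. r ^ k)"
proof
  show "range (\<lambda>k. r ^ k) \<subseteq> atoms (Sr r)"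
  proof
    fix a assume "a \<in> range (\<lambda>k. r ^ k)"
    then obtain k where a: "a = r ^ k" by auto
    have "b = 0 \<or> c = 0" if b: "b \<in> Sr r" and c: "c \<in> Sr r" and bc: "r ^ k = b + c" for b c
    proof (rule ccontr)
      assume nonzero: "\<not> (b = 0 \<or> c = 0)"
      obtain u v where uv: "b = val u" "c = val v" using b c unfolding Sr_eq_range_val by auto
      then have "u \<noteq> {#}" "v \<noteq> {#}" using nonzero by auto
      then have "2 \<le> size (u + v)" by (simp add: Suc_le_eq nonempty_has_size)
      then show False using val_neq_power[of "u + v" k] bc uv by simp
    qed
    then show "a \<in> atoms (Sr r)" using a power_in_Sr r_pos unfolding atoms_def by simp
  qed
qed (rule atoms_subset_powers)

lemma Zf_eq: "Zf (Sr r) x = image_mset (\<lambda>k. r ^ k) ` {u. val u = x}"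
proof
  show "Zf (Sr r) x \<subseteq> image_mset (\<lambda>k. r ^ k) ` {u. val u = x}"
  proof
    fix z assume z: "z \<in> Zf (Sr r) x"
    then obtain u where "z = image_mset (\<lambda>k. r ^ k) u"
      using set_mset_subset_range unfolding Zf_def atoms_eq by blast
    then show "z \<in> image_mset (\<lambda>k. r ^ k) ` {u. val u = x}" using z unfolding Zf_def val_def by auto
  qed
qed (auto simp: Zf_def atoms_eq val_def)

lemma Lset_eq: "Lset (Sr r) x = size ` {u. val u = x}"
  unfolding Lset_def Zf_eq by (auto simp: image_image)

lemma nonunique_factorization_iff:
  "(\<exists>z\<in>Zf (Sr r) x. \<exists>z'\<in>Zf (Sr r) x. z \<noteq> z') \<longleftrightarrow> (\<exists>u v. val u = x \<and> val v = x \<and> u \<noteq> v)"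
  unfolding Zf_eq using inj_image_powers by (auto dest: injD)

lemma Delta_eq_gap:
  assumes "val u = x" "val v = x" "u \<noteq> v"
  shows "Delta (Sr r) x = {gap}"
proof -
  have "adjacent\<^sup>*\<^sup>* u v" using assms(1,2) by (simp add: adjacents_if_val_eq)
  then obtain y where y: "adjacent u y" using assms(3) by (cases rule: converse_rtranclpE) auto
  then have "size u \<in> Lset (Sr r) x" "size y \<in> Lset (Sr r) x"
    using assms(1) adjacent_val[OF y] unfolding Lset_eq by auto
  then have "\<exists>a. a \<in> Lset (Sr r) x \<and> a + gap \<in> Lset (Sr r) x"
    using adjacent_size[OF y] by auto
  then obtain a where a: "a \<in> Lset (Sr r) x" "a + gap \<in> Lset (Sr r) x" by blast
  show ?thesis
    unfolding Delta_def
  proof (rule successive_distances_eq[OF gap_pos _ _ a])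
    fix a b assume "a \<in> Lset (Sr r) x" "b \<in> Lset (Sr r) x"
    then show "a mod gap = b mod gap"
      unfolding Lset_eq using adjacents_size_mod adjacents_if_val_eq by auto
  next
    fix a b l assume ab: "a \<in> Lset (Sr r) x" "b \<in> Lset (Sr r) x" and l: "a \<le> l" "l \<le> b" "l mod gap = a mod gap"
    then obtain u' v' where "a = size u'" "b = size v'" "val u' = x" "val v' = x" unfolding Lset_eq by auto
    then obtain w where "adjacent\<^sup>*\<^sup>* u' w" "size w = l"
      using adjacents_size_between[OF adjacents_if_val_eq[of u' v']] l by fastforce
    then show "l \<in> Lset (Sr r) x"
      using adjacents_val \<open>val u' = x\<close> unfolding Lset_eq by force
  qed
qed

lemma chain_between_factorizations:
  assumes "z \<in> Zf (Sr r) x" "z' \<in> Zf (Sr r) x"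
  shows "\<exists>zs. is_chain (Sr r) x (enat (max n d)) zs \<and> hd zs = z \<and> last zs = z'"
proof -
  obtain a b where ab: "z = image_mset (\<lambda>k. r ^ k) a" "z' = image_mset (\<lambda>k. r ^ k) b"
      "val a = x" "val b = x"
    using assms unfolding Zf_eq by auto
  obtain us where us: "us \<noteq> []" "hd us = a" "last us = b" "set us \<subseteq> {y. adjacent\<^sup>*\<^sup>* a y}"
      "\<forall>i. Suc i < length us \<longrightarrow> adjacent (us ! i) (us ! Suc i)"
    using rtranclp_imp_chain[OF adjacents_if_val_eq[of a b]] ab(3,4) by auto
  define zs where "zs = map (image_mset (\<lambda>k. r ^ k)) us"
  have "set zs \<subseteq> Zf (Sr r) x"
    using us(4) ab(3) adjacents_val unfolding zs_def Zf_eq by auto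
  moreover have "fdist (zs ! i) (zs ! Suc i) = max n d" if "Suc i < length zs" for i
    using us(5) that fdist_adjacent unfolding zs_def by simp
  ultimately have "is_chain (Sr r) x (enat (max n d)) zs"
    using us(1) unfolding is_chain_def zs_def by auto
  then show ?thesis using us(1-3) ab(1,2) by (auto simp: zs_def hd_map last_map)
qed

lemma max_le_chain_bound:
  assumes "is_chain (Sr r) x N zs" "hd zs \<noteq> last zs"
  shows "enat (max n d) \<le> N"
proof -
  obtain i where i: "Suc i < length zs" "zs ! i \<noteq> zs ! Suc i"
    using hd_eq_last_if_adjacent_eq assms unfolding is_chain_def by blast
  moreover have "zs ! i \<in> Zf (Sr r) x" "zs ! Suc i \<in> Zf (Sr r) x"
    using assms(1) i(1) unfolding is_chain_def by (meson Suc_lessD nth_mem subsetD)+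
  ultimately obtain a b where ab: "zs ! i = image_mset (\<lambda>k. r ^ k) a"
      "zs ! Suc i = image_mset (\<lambda>k. r ^ k) b" "val a = x" "val b = x"
    unfolding Zf_eq by blast
  have "a \<noteq> b" using ab(1,2) i(2) by auto
  then have "max n d \<le> fdist (zs ! i) (zs ! Suc i)"
    using max_le_size_diff[of a b] ab by (simp add: fdist_image_powers)
  moreover have "enat (fdist (zs ! i) (zs ! Suc i)) \<le> N"
    using assms(1) i(1) unfolding is_chain_def by blast
  ultimately show ?thesis by (meson enat_ord_simps(1) order_trans)
qed

lemma cat_eq_max:
  assumes "val u = x" "val v = x" "u \<noteq> v"
  shows "cat (Sr r) x = enat (max n d)"
  unfolding cat_def
proof (rule Inf_eqI)
  fix N assume "N \<in> {N. \<forall>z\<in>Zf (Sr r) x. \<forall>z'\<in>Zf (Sr r) x.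
       \<exists>zs. is_chain (Sr r) x N zs \<and> hd zs = z \<and> last zs = z'}"
  moreover have "image_mset (\<lambda>k. r ^ k) u \<in> Zf (Sr r) x" "image_mset (\<lambda>k. r ^ k) v \<in> Zf (Sr r) x"
    using assms unfolding Zf_eq by auto
  ultimately obtain zs where "is_chain (Sr r) x N zs"
      "hd zs = image_mset (\<lambda>k. r ^ k) u" "last zs = image_mset (\<lambda>k. r ^ k) v"
    by blast
  moreover have "image_mset (\<lambda>k. r ^ k) u \<noteq> image_mset (\<lambda>k. r ^ k) v"
    using assms(3) inj_image_powers by (auto dest: injD)
  ultimately show "enat (max n d) \<le> N" using max_le_chain_bound by simp
qed (use chain_between_factorizations in blast)

lemma Delta_cases: "Delta (Sr r) x = {} \<or> Delta (Sr r) x = {gap}"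
  using Delta_eq_gap Delta_eq_empty_if_unique_factorization nonunique_factorization_iff by metis

lemma cat_cases: "cat (Sr r) x = 0 \<or> cat (Sr r) x = enat (max n d)"
  using cat_eq_max cat_eq_0_if_unique_factorization nonunique_factorization_iff by metis

lemma of_nat_n_factorizations:
  "val (replicate_mset n 0) = of_nat n" "val (replicate_mset d 1) = of_nat n"
  "replicate_mset n 0 \<noteq> replicate_mset d (1::nat)"
proof -
  show "val (replicate_mset n 0) = of_nat n" "val (replicate_mset d 1) = of_nat n"
    using d_mult_power_Suc[of 0] by simp_all
  show "replicate_mset n 0 \<noteq> replicate_mset d (1::nat)"
  proof
    assume eq: "replicate_mset n 0 = replicate_mset d (1::nat)"
    have "n = count (replicate_mset n 0) (0::nat)" by simp
    also have "\<dots> = count (replicate_mset d (1::nat)) 0" by (simp only: eq)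
    also have "\<dots> = 0" by simp
    finally show False using n_pos by simp
  qed
qed

lemma of_nat_n_in_Sr: "of_nat n \<in> Sr r - {0}"
proof -
  have "of_nat n \<in> range val" by (rule range_eqI[where x = "replicate_mset n 0"]) simp
  then show ?thesis using n_pos unfolding Sr_eq_range_val by simp
qed

lemma Delta_eq_gap_if_nonunique:
  "(\<exists>z\<in>Zf (Sr r) x. \<exists>z'\<in>Zf (Sr r) x. z \<noteq> z') \<Longrightarrow> Delta (Sr r) x = {gap}"
  using Delta_eq_gap nonunique_factorization_iff by blast

lemma Delta_monoid_eq: "Delta_monoid (Sr r) = {gap}"
proof
  show "Delta_monoid (Sr r) \<subseteq> {gap}" unfolding Delta_monoid_def using Delta_cases by blast
  show "{gap} \<subseteq> Delta_monoid (Sr r)"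
    using Delta_eq_gap[OF of_nat_n_factorizations] of_nat_n_in_Sr unfolding Delta_monoid_def by blast
qed

lemma Ca_eq: "Ca (Sr r) = {enat (max n d)}"
proof
  show "Ca (Sr r) \<subseteq> {enat (max n d)}" unfolding Ca_def using cat_cases by fastforce
  have "enat (max n d) > 0" using n_pos by (simp add: zero_enat_def)
  then show "{enat (max n d)} \<subseteq> Ca (Sr r)"
    using cat_eq_max[OF of_nat_n_factorizations] of_nat_n_in_Sr unfolding Ca_def by force
qed

lemma cat_monoid_eq: "cat_monoid (Sr r) = enat (max n d)"
  unfolding cat_monoid_def
proof (rule antisym)
  show "(SUP x\<in>Sr r. cat (Sr r) x) \<le> enat (max n d)"
    using cat_cases by (intro SUP_least) (metis order_refl zero_le)
  show "enat (max n d) \<le> (SUP x\<in>Sr r. cat (Sr r) x)"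
    using SUP_upper[of "of_nat n" "Sr r" "cat (Sr r)"] cat_eq_max[OF of_nat_n_factorizations] of_nat_n_in_Sr by simp
qed

lemma not_BF_monoid_if_less_1:
  assumes "r < 1"
  shows "\<not> BF_monoid (Sr r)"
proof
  assume bf: "BF_monoid (Sr r)"
  have nd: "n < d" using assms r_eq two_le_d by (simp add: divide_less_eq)
  define u where "u t = (\<Sum>s\<in>{1..t}. replicate_mset (d - n) s) + replicate_mset n t" for t :: nat
  have "val (u t) = of_nat n" for t
  proof (induction t)
    case (Suc t)
    have "of_nat (d - n) * r ^ Suc t + of_nat n * r ^ Suc t = (of_nat n * r ^ t :: rat)"
      using nd d_mult_power_Suc[of t] by (simp add: of_nat_diff algebra_simps)
    then show ?case using Suc by (simp add: u_def algebra_simps)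
  qed (simp add: u_def)
  moreover have "size (u t) = t * (d - n) + n" for t
    by (induction t) (simp_all add: u_def)
  ultimately have "range (\<lambda>t. t * (d - n) + n) \<subseteq> Lset (Sr r) (of_nat n)"
    unfolding Lset_eq by (auto intro!: image_eqI)
  moreover have "infinite (range (\<lambda>t. t * (d - n) + n))"
    using nd by (intro range_inj_infinite) (auto simp: inj_def)
  ultimately show False using bf of_nat_n_in_Sr finite_subset unfolding BF_monoid_def by blast
qed

end

lemma numr_denr:
  assumes "0 < r"
  shows "0 < numr r" "0 < denr r" "coprime (numr r) (denr r)"
    "r = of_int (numr r) / of_int (denr r)"
proof -
  have q: "quotient_of r = (numr r, denr r)" by (simp add: numr_def denr_def)
  show den: "0 < denr r" by (rule quotient_of_denom_pos[OF q])
  show "coprime (numr r) (denr r)" by (rule quotient_of_coprime[OF q])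
  show r: "r = of_int (numr r) / of_int (denr r)" by (rule quotient_of_div[OF q])
  show "0 < numr r" using assms den by (subst (asm) r) (simp add: zero_less_divide_iff)
qed

lemma atomic_power_monoid_numr_denr:
  assumes "0 < r" "r \<notin> \<nat>" "atomic (Sr r)"
  shows "atomic_power_monoid r (nat (numr r)) (nat (denr r))"
proof -
  note nd = numr_denr[OF assms(1)]
  have r: "r = of_nat (nat (numr r)) / of_nat (nat (denr r))"
    using nd by simp
  have "denr r \<noteq> 1"
  proof
    assume "denr r = 1"
    then have "r = of_nat (nat (numr r))" using r by simp
    moreover have "(of_nat (nat (numr r)) :: rat) \<in> \<nat>" by simp
    ultimately show False using assms(2) by argo
  qed
  moreover have "coprime (int (nat (numr r))) (int (nat (denr r)))" using nd by simp
  then have "coprime (nat (numr r)) (nat (denr r))" by (simp only: coprime_int_iff)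
  ultimately have pm: "power_monoid r (nat (numr r)) (nat (denr r))"
    using nd r by unfold_locales auto
  then show ?thesis
    using power_monoid.two_le_n_if_atomic[OF pm assms(3)]
    by (simp add: atomic_power_monoid_def atomic_power_monoid_axioms_def)
qed

lemma BF_monoid_Sr_iff:
  assumes "0 < r" "atomic (Sr r)"
  shows "BF_monoid (Sr r) \<longleftrightarrow> 1 \<le> r"
proof (cases "1 \<le> r")
  case False
  then have "r \<notin> \<nat>" using assms(1) by (auto elim!: Nats_cases)
  then interpret atomic_power_monoid r "nat (numr r)" "nat (denr r)"
    using atomic_power_monoid_numr_denr assms by blast
  show ?thesis using not_BF_monoid_if_less_1 False by simp
qed (simp add: BF_monoid_Sr_if_ge_1)

lemma Sr_Nats_Delta_cat:
  assumes "r \<in> \<nat>"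
  shows "Delta (Sr r) x = {} \<and> cat (Sr r) x = 0"
  using Delta_eq_empty_if_unique_factorization cat_eq_0_if_unique_factorization
    Zf_Sr_Nats_unique[OF assms] by blast

lemma Sr_not_Nats_Delta_cat:
  assumes "0 < r" "r \<notin> \<nat>" "atomic (Sr r)"
  shows "(\<forall>x\<in>Sr r. (\<exists>z\<in>Zf (Sr r) x. \<exists>z'\<in>Zf (Sr r) x. z \<noteq> z') \<longrightarrow>
           Delta (Sr r) x = {nat \<bar>numr r - denr r\<bar>})
    \<and> Delta_monoid (Sr r) = {nat \<bar>numr r - denr r\<bar>}
    \<and> Ca (Sr r) = {enat (nat (max (numr r) (denr r)))}
    \<and> cat_monoid (Sr r) = enat (nat (max (numr r) (denr r)))"
proof -
  interpret atomic_power_monoid r "nat (numr r)" "nat (denr r)"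
    using atomic_power_monoid_numr_denr assms by blast
  have "gap = nat \<bar>numr r - denr r\<bar>"
    and "max (nat (numr r)) (nat (denr r)) = nat (max (numr r) (denr r))"
    using numr_denr[OF assms(1)] by (auto simp: gap_def)
  then show ?thesis using Delta_eq_gap_if_nonunique Delta_monoid_eq Ca_eq cat_monoid_eq by simp
qed

theorem corollary3p4:
  fixes r :: rat
  assumes "r > 0" and "atomic (Sr r)"
  shows "(BF_monoid (Sr r) \<longleftrightarrow> r \<ge> 1)
    \<and> (r \<in> \<nat> \<longrightarrow>
         (\<exists>f :: rat \<Rightarrow> nat. bij_betw f (Sr r) UNIV \<and> f 0 = 0 \<and>
             (\<forall>x\<in>Sr r. \<forall>y\<in>Sr r. f (x + y) = f x + f y))
       \<and> (\<forall>x\<in>Sr r - {0}. Delta (Sr r) x = {} \<and> cat (Sr r) x = 0))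
    \<and> (r \<notin> \<nat> \<longrightarrow>
         (\<forall>x\<in>Sr r. (\<exists>z\<in>Zf (Sr r) x. \<exists>z'\<in>Zf (Sr r) x. z \<noteq> z') \<longrightarrow>
             Delta (Sr r) x = {nat \<bar>numr r - denr r\<bar>})
       \<and> Delta_monoid (Sr r) = {nat \<bar>numr r - denr r\<bar>})
    \<and> (r \<notin> \<nat> \<longrightarrow>
         Ca (Sr r) = {enat (nat (max (numr r) (denr r)))}
       \<and> cat_monoid (Sr r) = enat (nat (max (numr r) (denr r))))"
  using BF_monoid_Sr_iff[OF assms] Sr_Nats_iso Sr_Nats_Delta_cat
    Sr_not_Nats_Delta_cat[OF assms(1) _ assms(2)]
  by auto

end
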